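(* The deterministic query complexity of Local Search on the Odd graph satisfies $$D[LS(K(2k+1,k))]\in\Omega\!\left(\frac{1}{k}\binom{2k+1}{k}\right)\quad\text{as } k\to\infty.$$
   Context: The Kneser graph $K(n,k)$ has as vertices the $k$-element subsets of $[n]$, with two vertices adjacent if and only if they are disjoint. Local Search on a finite undirected graph $G=(V,E)$ is as follows. An unknown function $f:V\to\mathbb{R}$ is accessed only through queries: querying $a\in V$ returns $f(a)$, and queries may be adaptive. The algorithm must output a local maximum, i.e. a vertex $a$ with $f(a)\ge f(b)$ for every edge $(a,b)\in E$. $D[LS(G)]$ is the minimum, over deterministic algorithms, of the maximum, over all $f$, of the number of queries used. *)

theory Defs
  imports Complex_Main "HOL-Library.Landau_Symbols"
begin

definition kneser_vertices :: "nat \<Rightarrow> nat \<Rightarrow> nat set set" where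
  "kneser_vertices n k = {A. A \<subseteq> {..<n} \<and> card A = k}"

definition kneser_adj :: "nat set \<Rightarrow> nat set \<Rightarrow> bool" where
  "kneser_adj A B \<longleftrightarrow> A \<inter> B = {}"

definition is_local_max :: "'v set \<Rightarrow> ('v \<Rightarrow> 'v \<Rightarrow> bool) \<Rightarrow> ('v \<Rightarrow> real) \<Rightarrow> 'v \<Rightarrow> bool" where
  "is_local_max V E f a \<longleftrightarrow> a \<in> V \<and> (\<forall>b\<in>V. E a b \<longrightarrow> f b \<le> f a)"

text \<open>Deterministic adaptive query algorithms as decision trees: either output a vertex,
  or query a vertex and continue depending on the returned real value.\<close>
datatype 'v qtree = Output 'v | Query 'v "real \<Rightarrow> 'v qtree"

primrec qt_result :: "'v qtree \<Rightarrow> ('v \<Rightarrow> real) \<Rightarrow> 'v" where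
  "qt_result (Output a) f = a"
| "qt_result (Query v g) f = qt_result (g (f v)) f"

primrec qt_cost :: "'v qtree \<Rightarrow> ('v \<Rightarrow> real) \<Rightarrow> nat" where
  "qt_cost (Output a) f = 0"
| "qt_cost (Query v g) f = Suc (qt_cost (g (f v)) f)"

definition D_LS :: "'v set \<Rightarrow> ('v \<Rightarrow> 'v \<Rightarrow> bool) \<Rightarrow> nat" where
  "D_LS V E = (LEAST q. \<exists>T. (\<forall>f. is_local_max V E f (qt_result T f)) \<and> (\<forall>f. qt_cost T f \<le> q))"

end

theory Submission
  imports Defs
begin

(* Against a deterministic algorithm, the answers can be chosen so that the vertices still able
   to carry the local maximum form a connected set, which a query inside it only shrinks to a
   largest component of the rest. When the algorithm stops this set is gone, and at the moment it
   dropped to half of the graph the queried vertices formed a balanced separator: no component of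
   their complement has more than half of the vertices.

   In the odd graph K(2k+1, k) with N vertices, a set Q with this property and |Q| < N/4 leaves
   about N^2 pairs (A, B) in different components of the complement. For each ordering of A - B
   and of B - A there is a walk of length 2 |A - B| from A to B exchanging one element at a time,
   and it must meet Q. Few such walks pass through a fixed vertex at a fixed position, so by
   Vandermonde's identity the number of separated pairs is at most (2k+1) |Q| N, which forces
   |Q| >= 3N / (16 (2k+1)). *)

section \<open>Reachability inside a vertex set\<close>

definition edge_within :: "('v \<Rightarrow> 'v \<Rightarrow> bool) \<Rightarrow> 'v set \<Rightarrow> 'v \<Rightarrow> 'v \<Rightarrow> bool" where
  "edge_within E S x y \<longleftrightarrow> x \<in> S \<and> y \<in> S \<and> E x y"

definition reachable_within :: "('v \<Rightarrow> 'v \<Rightarrow> bool) \<Rightarrow> 'v set \<Rightarrow> 'v \<Rightarrow> 'v \<Rightarrow> bool" where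
  "reachable_within E S = (edge_within E S)\<^sup>*\<^sup>*"

definition component_within :: "('v \<Rightarrow> 'v \<Rightarrow> bool) \<Rightarrow> 'v set \<Rightarrow> 'v \<Rightarrow> 'v set" where
  "component_within E S c = {w \<in> S. reachable_within E S c w}"

definition dist_within :: "('v \<Rightarrow> 'v \<Rightarrow> bool) \<Rightarrow> 'v set \<Rightarrow> 'v \<Rightarrow> 'v \<Rightarrow> nat" where
  "dist_within E S u w = (LEAST m. (edge_within E S ^^ m) u w)"

definition separated_pairs :: "('v \<Rightarrow> 'v \<Rightarrow> bool) \<Rightarrow> 'v set \<Rightarrow> ('v \<times> 'v) set" where
  "separated_pairs E S = {(a, b). a \<in> S \<and> b \<in> S \<and> \<not> reachable_within E S a b}"

definition balanced_separator :: "'v set \<Rightarrow> ('v \<Rightarrow> 'v \<Rightarrow> bool) \<Rightarrow> 'v set \<Rightarrow> bool" where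
  "balanced_separator V E Q \<longleftrightarrow>
     Q \<subseteq> V \<and> (\<forall>u\<in>V - Q. 2 * card (component_within E (V - Q) u) \<le> card V)"

lemma reachable_within_refl [simp]: "reachable_within E S x x"
  by (simp add: reachable_within_def)

lemma reachable_within_step:
  "x \<in> S \<Longrightarrow> y \<in> S \<Longrightarrow> E x y \<Longrightarrow> reachable_within E S y z \<Longrightarrow> reachable_within E S x z"
  unfolding reachable_within_def
  by (rule converse_rtranclp_into_rtranclp) (auto simp: edge_within_def)

lemma reachable_within_trans:
  "reachable_within E S x y \<Longrightarrow> reachable_within E S y z \<Longrightarrow> reachable_within E S x z"
  unfolding reachable_within_def by auto

lemma reachable_within_mem: "reachable_within E S x y \<Longrightarrow> x \<noteq> y \<Longrightarrow> x \<in> S \<and> y \<in> S"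
  unfolding reachable_within_def
  by (induction rule: rtranclp_induct) (auto simp: edge_within_def)

lemma reachable_within_sym:
  assumes sym: "\<And>x y. E x y \<Longrightarrow> E y x"
  shows "reachable_within E S x y \<Longrightarrow> reachable_within E S y x"
  unfolding reachable_within_def
proof (induction rule: rtranclp_induct)
  case base then show ?case by simp
next
  case (step y z)
  then have "edge_within E S z y" using sym by (auto simp: edge_within_def)
  with step show ?case by (meson converse_rtranclp_into_rtranclp)
qed

lemma dist_within_decreasing_neighbour:
  assumes "reachable_within E S u w" "u \<noteq> w"
  shows "\<exists>b. b \<in> S \<and> E u b \<and> reachable_within E S b w \<and> dist_within E S b w < dist_within E S u w"
proof -
  from assms(1) obtain m where m: "(edge_within E S ^^ m) u w"
    unfolding reachable_within_def using rtranclp_imp_relpowp by metis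
  define d where "d = dist_within E S u w"
  have d: "(edge_within E S ^^ d) u w"
    unfolding d_def dist_within_def by (rule LeastI[of _ m]) (rule m)
  have "d \<noteq> 0" using d assms(2) by (metis relpowp.simps(1))
  then obtain d' where d': "d = Suc d'" by (cases d) auto
  then obtain b where b: "edge_within E S u b" "(edge_within E S ^^ d') b w"
    using d relpowp_Suc_D2 by metis
  have "dist_within E S b w \<le> d'" unfolding dist_within_def by (rule Least_le) (rule b(2))
  moreover have "reachable_within E S b w"
    unfolding reachable_within_def using b(2) relpowp_imp_rtranclp by metis
  ultimately show ?thesis using b(1) d' unfolding d_def edge_within_def by auto
qed

lemma component_within_subset: "component_within E S c \<subseteq> S"
  by (auto simp: component_within_def)

lemma component_within_closed:
  "x \<in> component_within E S c \<Longrightarrow> y \<in> S \<Longrightarrow> E x y \<Longrightarrow> y \<in> component_within E S c"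
  unfolding component_within_def
  by (metis (mono_tags, lifting) mem_Collect_eq reachable_within_refl reachable_within_step
      reachable_within_trans)

lemma reachable_within_component:
  assumes sym: "\<And>x y. E x y \<Longrightarrow> E y x"
    and x: "x \<in> component_within E S c" and y: "y \<in> component_within E S c"
  shows "reachable_within E (component_within E S c) x y"
proof -
  let ?C = "component_within E S c"
  have "reachable_within E S x y"
    using x y reachable_within_sym[where E = E, OF sym] reachable_within_trans[of E S x c y]
    unfolding component_within_def by blast
  then show ?thesis
    unfolding reachable_within_def
  proof (induction rule: rtranclp_induct)
    case base then show ?case by simp
  next
    case (step y z)
    have "y \<in> ?C"
      using x reachable_within_mem[of E ?C x y] step(3) unfolding reachable_within_def by auto
    then have "edge_within E ?C y z"
      using component_within_closed[of y E S c z] step(2) by (auto simp: edge_within_def)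
    then show ?case using step(3) by (meson rtranclp.rtrancl_into_rtrancl)
  qed
qed

lemma reachable_within_mono:
  "S \<subseteq> S' \<Longrightarrow> reachable_within E S x y \<Longrightarrow> reachable_within E S' x y"
  unfolding reachable_within_def
  by (erule rtranclp_mono[THEN predicate2D, rotated]) (auto simp: edge_within_def)

lemma reachable_within_stays:
  assumes closed: "\<And>x y. x \<in> S \<inter> T \<Longrightarrow> y \<in> S \<Longrightarrow> E x y \<Longrightarrow> y \<in> T"
    and "reachable_within E S u w" and "u \<in> T"
  shows "reachable_within E (S \<inter> T) u w"
  using assms(2) unfolding reachable_within_def
proof (induction rule: rtranclp_induct)
  case base then show ?case by simp
next
  case (step y z)
  have "y \<in> T"
    using \<open>u \<in> T\<close> reachable_within_mem[of E "S \<inter> T" u y] step(3)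
    unfolding reachable_within_def by blast
  then have "edge_within E (S \<inter> T) y z"
    using closed[of y z] step(2) by (auto simp: edge_within_def)
  then show ?case using step(3) by (meson rtranclp.rtrancl_into_rtrancl)
qed

lemma component_within_mono:
  "S \<subseteq> S' \<Longrightarrow> component_within E S u \<subseteq> component_within E S' u"
  unfolding component_within_def using reachable_within_mono[of S S' E u] by blast

lemma component_within_stays:
  assumes closed: "\<And>x y. x \<in> S \<inter> T \<Longrightarrow> y \<in> S \<Longrightarrow> E x y \<Longrightarrow> y \<in> T" and u: "u \<in> T"
  shows "component_within E S u \<subseteq> component_within E (S \<inter> T) u"
proof
  fix w assume "w \<in> component_within E S u"
  then have w: "w \<in> S" "reachable_within E (S \<inter> T) u w"
    using reachable_within_stays[where S = S and T = T, OF closed _ u]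
    unfolding component_within_def by auto
  moreover have "w \<in> T"
    using u reachable_within_mem[OF w(2)] by (cases "u = w") simp_all
  ultimately show "w \<in> component_within E (S \<inter> T) u" unfolding component_within_def by blast
qed

lemma component_within_cut_neighbour:
  assumes sym: "\<And>x y. E x y \<Longrightarrow> E y x"
    and walk: "reachable_within E R v c" and c: "c \<in> component_within E (R - {v}) c0"
  shows "\<exists>p\<in>component_within E (R - {v}) c0. E v p"
proof -
  let ?C = "component_within E (R - {v}) c0"
  have "x \<in> ?C \<or> (\<exists>p\<in>?C. E v p)" if "reachable_within E R x c" for x
    using that unfolding reachable_within_def
  proof (induction rule: converse_rtranclp_induct)
    case base then show ?case using c by simp
  next
    case (step x y)
    have "x \<in> R" "E y x" "E x y" using step(1) sym by (auto simp: edge_within_def)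
    then show ?case
      using step(3) component_within_closed[of y E "R - {v}" c0 x] by (cases "x = v") auto
  qed
  moreover have "v \<notin> ?C" using component_within_subset by fastforce
  ultimately show ?thesis using walk by blast
qed

lemma reachable_within_cut_remainder:
  assumes sym: "\<And>x y. E x y \<Longrightarrow> E y x"
    and walk: "reachable_within E R a v"
    and a: "a \<in> R - component_within E (R - {v}) c0"
  shows "reachable_within E (R - component_within E (R - {v}) c0) a v"
proof -
  let ?C = "component_within E (R - {v}) c0"
  have "x \<in> R - ?C \<longrightarrow> reachable_within E (R - ?C) x v" if "reachable_within E R x v" for x
    using that unfolding reachable_within_def
  proof (induction rule: converse_rtranclp_induct)
    case base then show ?case by simp
  next
    case (step x y)
    show ?case
    proof (intro impI)
      assume x: "x \<in> R - ?C"
      show "(edge_within E (R - ?C))\<^sup>*\<^sup>* x v"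
      proof (cases "x = v")
        case False
        have "y \<in> R" "E y x" using step(1) sym by (auto simp: edge_within_def)
        then have "y \<in> R - ?C"
          using x False component_within_closed[of y E "R - {v}" c0 x] by auto
        moreover have "edge_within E (R - ?C) x y"
          using x step(1) calculation by (auto simp: edge_within_def)
        ultimately show ?thesis using step(3) by (meson converse_rtranclp_into_rtranclp)
      qed simp
    qed
  qed
  then show ?thesis using walk a by blast
qed

lemma cut_discarded_ascent:
  assumes sym: "\<And>x y. E x y \<Longrightarrow> E y x"
    and conn: "\<And>x y. x \<in> R \<Longrightarrow> y \<in> R \<Longrightarrow> reachable_within E R x y"
    and C: "C = component_within E (R - {v}) c0" "C \<noteq> {}" and v: "v \<in> R" and u: "u \<in> R - C"
  shows "\<exists>w\<in>R. E u w \<and>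
           (w \<in> C \<or> w \<in> R - C \<and> dist_within E (R - C) w v < dist_within E (R - C) u v)"
proof (cases "u = v")
  case True
  obtain c where c: "c \<in> C" using C(2) by blast
  have "c \<in> R" using c component_within_subset unfolding C(1) by fastforce
  then have "reachable_within E R v c" using conn v by blast
  from component_within_cut_neighbour[where E = E, OF sym this] c
  obtain p where "p \<in> C" "E v p" unfolding C(1) by blast
  moreover have "p \<in> R" using \<open>p \<in> C\<close> component_within_subset unfolding C(1) by fastforce
  ultimately show ?thesis using True by blast
next
  case False
  have "reachable_within E R u v" using conn u v by blast
  then have "reachable_within E (R - C) u v"
    using reachable_within_cut_remainder[where E = E, OF sym] u unfolding C(1) by blast
  from dist_within_decreasing_neighbour[OF this False] show ?thesis by blast
qed

definition largest_component :: "('v \<Rightarrow> 'v \<Rightarrow> bool) \<Rightarrow> 'v set \<Rightarrow> 'v set" where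
  "largest_component E S =
     component_within E S (arg_max_on (\<lambda>c. card (component_within E S c)) S)"

lemma card_component_le_largest:
  assumes "finite S" "c \<in> S"
  shows "card (component_within E S c) \<le> card (largest_component E S)"
proof -
  have "\<forall>c'. c' \<in> S \<longrightarrow> card (component_within E S c') < Suc (card S)"
    using card_mono[OF assms(1) component_within_subset] by (simp add: le_imp_less_Suc)
  from arg_max_nat_lemma[of "\<lambda>c. c \<in> S", OF assms(2) this] show ?thesis
    using assms(2) unfolding largest_component_def arg_max_on_def by blast
qed

lemma largest_component_subset: "largest_component E S \<subseteq> S"
  by (simp add: largest_component_def component_within_subset)

lemma balanced_separator_insert_cut_vertex:
  assumes fin: "finite V" and sym: "\<And>x y. E x y \<Longrightarrow> E y x"
    and R: "R \<subseteq> V" "v \<in> R" and Q: "Q \<subseteq> V"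
    and closed: "\<And>x y. x \<in> R \<Longrightarrow> y \<in> V \<Longrightarrow> E x y \<Longrightarrow> y \<in> R \<or> y \<in> Q"
    and small: "\<And>c. c \<in> R - {v} \<Longrightarrow> 2 * card (component_within E (R - {v}) c) \<le> card V"
    and big: "card V < 2 * card R"
  shows "balanced_separator V E (insert v Q)"
  unfolding balanced_separator_def
proof (intro conjI ballI)
  show "insert v Q \<subseteq> V" using R Q by blast
  let ?S = "V - insert v Q"
  fix u assume u: "u \<in> ?S"
  have finR: "finite R" using R fin finite_subset by blast
  show "2 * card (component_within E ?S u) \<le> card V"
  proof (cases "u \<in> R")
    case True
    have in_closed: "y \<in> R" if "x \<in> ?S \<inter> R" "y \<in> ?S" "E x y" for x y
      using that closed[of x y] by blast
    have "component_within E ?S u \<subseteq> component_within E (?S \<inter> R) u"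
      using component_within_stays[where S = ?S and T = R, OF in_closed True] .
    moreover have "component_within E (?S \<inter> R) u \<subseteq> component_within E (R - {v}) u"
      by (rule component_within_mono) blast
    moreover have "finite (component_within E (R - {v}) u)"
      by (rule finite_subset[OF component_within_subset]) (use finR in simp)
    ultimately have "card (component_within E ?S u) \<le> card (component_within E (R - {v}) u)"
      by (meson card_mono order_trans)
    moreover have "u \<in> R - {v}" using True u by blast
    ultimately show ?thesis using small[of u] by linarith
  next
    case False
    have out_closed: "y \<in> V - R" if "x \<in> ?S \<inter> (V - R)" "y \<in> ?S" "E x y" for x y
      using that closed[of y x] sym[of x y] by blast
    have "u \<in> V - R" using False u by blast
    with out_closed have "component_within E ?S u \<subseteq> component_within E (?S \<inter> (V - R)) u"
      by (rule component_within_stays)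
    then have "component_within E ?S u \<subseteq> V - R"
      using component_within_subset[of E "?S \<inter> (V - R)" u] by blast
    then have "card (component_within E ?S u) \<le> card (V - R)"
      by (rule card_mono[rotated]) (use fin in simp)
    also have "\<dots> = card V - card R" using R finR by (simp add: card_Diff_subset)
    finally show ?thesis using big by linarith
  qed
qed

lemma card_separated_pairs_ge:
  assumes fin: "finite V" and Q: "balanced_separator V E Q"
  shows "card (V - Q) * (2 * card (V - Q) - card V) \<le> 2 * card (separated_pairs E (V - Q))"
proof -
  let ?S = "V - Q"
  have finS: "finite ?S" using fin by simp
  have "separated_pairs E ?S = Sigma ?S (\<lambda>u. ?S - component_within E ?S u)"
    unfolding separated_pairs_def component_within_def by auto
  then have pairs: "card (separated_pairs E ?S) = (\<Sum>u\<in>?S. card ?S - card (component_within E ?S u))"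
    using finS by (simp add: card_Diff_subset finite_subset[OF component_within_subset]
        component_within_subset)
  have "2 * card ?S - card V \<le> 2 * (card ?S - card (component_within E ?S u))" if "u \<in> ?S" for u
  proof -
    have "card (component_within E ?S u) \<le> card ?S"
      by (rule card_mono[OF finS component_within_subset])
    moreover have "2 * card (component_within E ?S u) \<le> card V"
      using Q that unfolding balanced_separator_def by blast
    ultimately show ?thesis by linarith
  qed
  then have "(\<Sum>u\<in>?S. 2 * card ?S - card V) \<le> (\<Sum>u\<in>?S. 2 * (card ?S - card (component_within E ?S u)))"
    by (rule sum_mono)
  then show ?thesis using pairs by (simp add: sum_distrib_left)
qed

section \<open>An adversary for deterministic local search\<close>

record 'v adversary =
  alive :: "'v set"
  height :: "'v \<Rightarrow> real"
  clock :: nat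
  queried :: "'v set"

locale connected_graph =
  fixes V :: "'v set" and E :: "'v \<Rightarrow> 'v \<Rightarrow> bool"
  assumes finite_V: "finite V"
    and sym_E: "\<And>x y. E x y \<Longrightarrow> E y x"
    and has_neighbour: "\<And>v. v \<in> V \<Longrightarrow> \<exists>w\<in>V. E v w \<and> w \<noteq> v"
    and V_nonempty: "V \<noteq> {}"
    and connected: "\<And>x y. x \<in> V \<Longrightarrow> y \<in> V \<Longrightarrow> reachable_within E V x y"
begin

text \<open>The adversary answers queries so that the alive region, where it is still free to place
  the local maximum, stays connected. A query inside it shrinks it to a largest component of what
  remains; the discarded part gets heights just above everything fixed so far, increasing towards
  the queried vertex, which in turn has a neighbour in the new alive region.\<close>

definition adv_step :: "'v adversary \<Rightarrow> 'v \<Rightarrow> 'v adversary" where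
  "adv_step s v =
    (if v \<in> alive s then
       let R' = largest_component E (alive s - {v}); D = alive s - R' in
       s\<lparr>alive := R',
         height := (\<lambda>u. if u \<in> D then real (clock s) + 1 / (real (dist_within E D u v) + 1)
                        else height s u),
         clock := Suc (clock s), queried := insert v (queried s)\<rparr>
     else s\<lparr>clock := Suc (clock s), queried := queried s \<union> ({v} \<inter> V)\<rparr>)"

primrec adv_run :: "'v qtree \<Rightarrow> 'v adversary \<Rightarrow> 'v \<times> 'v adversary" where
  "adv_run (Output a) s = (a, s)"
| "adv_run (Query v g) s = adv_run (g (height (adv_step s v) v)) (adv_step s v)"

definition adv_init :: "'v adversary" where
  "adv_init = \<lparr>alive = V, height = (\<lambda>_. 0), clock = 0, queried = {}\<rparr>"

definition adv_invariant :: "'v adversary \<Rightarrow> bool" where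
  "adv_invariant s \<longleftrightarrow>
     alive s \<subseteq> V \<and> queried s \<subseteq> V \<and> alive s \<inter> queried s = {} \<and> card (queried s) \<le> clock s
     \<and> (\<forall>x\<in>alive s. \<forall>y\<in>alive s. reachable_within E (alive s) x y)
     \<and> (\<forall>x\<in>alive s. \<forall>y\<in>V. E x y \<longrightarrow> y \<in> alive s \<or> y \<in> queried s)
     \<and> (\<forall>u\<in>V - alive s. 0 < height s u \<and> height s u \<le> real (clock s))
     \<and> (alive s \<noteq> {} \<longrightarrow>
          (\<forall>u\<in>V - alive s. \<exists>w\<in>V. E u w \<and> (w \<in> alive s \<or> height s u < height s w)))
     \<and> (2 * card (alive s) \<le> card V \<longrightarrow> (\<exists>Q. balanced_separator V E Q \<and> card Q \<le> clock s))"

lemma adv_step_outside: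
  "v \<notin> alive s \<Longrightarrow> adv_step s v = s\<lparr>clock := Suc (clock s), queried := queried s \<union> ({v} \<inter> V)\<rparr>"
  by (simp add: adv_step_def)

lemma adv_step_inside:
  assumes "v \<in> alive s"
  shows "alive (adv_step s v) = largest_component E (alive s - {v})"
    and "queried (adv_step s v) = insert v (queried s)"
    and "clock (adv_step s v) = Suc (clock s)"
    and "height (adv_step s v) u =
           (if u \<in> alive s - alive (adv_step s v)
            then real (clock s) + 1 / (real (dist_within E (alive s - alive (adv_step s v)) u v) + 1)
            else height s u)"
  using assms by (simp_all add: adv_step_def Let_def)

lemma adv_step_clock: "clock (adv_step s v) = Suc (clock s)"
  by (simp add: adv_step_def Let_def)

lemma adv_step_alive_subset: "alive (adv_step s v) \<subseteq> alive s - {v}"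
  using largest_component_subset[of E "alive s - {v}"] by (auto simp: adv_step_def Let_def)

lemma adv_step_height_fixed: "u \<notin> alive s \<Longrightarrow> height (adv_step s v) u = height s u"
  by (simp add: adv_step_def Let_def)

lemma adv_invariantI:
  assumes "alive s \<subseteq> V" "queried s \<subseteq> V" "alive s \<inter> queried s = {}" "card (queried s) \<le> clock s"
    "\<And>x y. x \<in> alive s \<Longrightarrow> y \<in> alive s \<Longrightarrow> reachable_within E (alive s) x y"
    "\<And>x y. x \<in> alive s \<Longrightarrow> y \<in> V \<Longrightarrow> E x y \<Longrightarrow> y \<in> alive s \<or> y \<in> queried s"
    "\<And>u. u \<in> V - alive s \<Longrightarrow> 0 < height s u \<and> height s u \<le> real (clock s)"
    "\<And>u. alive s \<noteq> {} \<Longrightarrow> u \<in> V - alive s \<Longrightarrow>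
       \<exists>w\<in>V. E u w \<and> (w \<in> alive s \<or> height s u < height s w)"
    "2 * card (alive s) \<le> card V \<Longrightarrow> \<exists>Q. balanced_separator V E Q \<and> card Q \<le> clock s"
  shows "adv_invariant s"
  using assms unfolding adv_invariant_def by blast

lemma adv_invariantD:
  assumes "adv_invariant s"
  shows "alive s \<subseteq> V" "queried s \<subseteq> V" "alive s \<inter> queried s = {}" "card (queried s) \<le> clock s"
    "\<And>x y. x \<in> alive s \<Longrightarrow> y \<in> alive s \<Longrightarrow> reachable_within E (alive s) x y"
    "\<And>x y. x \<in> alive s \<Longrightarrow> y \<in> V \<Longrightarrow> E x y \<Longrightarrow> y \<in> alive s \<or> y \<in> queried s"
    "\<And>u. u \<in> V - alive s \<Longrightarrow> 0 < height s u \<and> height s u \<le> real (clock s)"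
    "\<And>u. alive s \<noteq> {} \<Longrightarrow> u \<in> V - alive s \<Longrightarrow>
       \<exists>w\<in>V. E u w \<and> (w \<in> alive s \<or> height s u < height s w)"
    "2 * card (alive s) \<le> card V \<Longrightarrow> \<exists>Q. balanced_separator V E Q \<and> card Q \<le> clock s"
  using assms unfolding adv_invariant_def by blast+

lemma adv_invariant_step_outside:
  assumes I: "adv_invariant s" and v: "v \<notin> alive s"
  shows "adv_invariant (adv_step s v)"
proof -
  note D = adv_invariantD[OF I]
  have [simp]: "alive (adv_step s v) = alive s" "height (adv_step s v) = height s"
    "clock (adv_step s v) = Suc (clock s)" "queried (adv_step s v) = queried s \<union> ({v} \<inter> V)"
    by (simp_all add: adv_step_outside[OF v])
  have "finite (queried s)" using D(2) finite_V finite_subset by blast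
  then have "card (queried s \<union> ({v} \<inter> V)) \<le> Suc (card (queried s))"
    by (cases "v \<in> V") (simp_all add: card_insert_if)
  then show ?thesis
  proof (intro adv_invariantI)
    show "queried (adv_step s v) \<subseteq> V" using D(2) by simp
    show "alive (adv_step s v) \<inter> queried (adv_step s v) = {}" using D(3) v by auto
    show "y \<in> alive (adv_step s v) \<or> y \<in> queried (adv_step s v)"
      if "x \<in> alive (adv_step s v)" "y \<in> V" "E x y" for x y using D(6) that by auto
    show "0 < height (adv_step s v) u \<and> height (adv_step s v) u \<le> real (clock (adv_step s v))"
      if "u \<in> V - alive (adv_step s v)" for u using D(7)[of u] that by simp
    show "\<exists>Q. balanced_separator V E Q \<and> card Q \<le> clock (adv_step s v)"
      if "2 * card (alive (adv_step s v)) \<le> card V" using D(9) le_SucI that by auto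
  qed (use D in simp_all)
qed

lemma adv_step_inside_ascent:
  assumes I: "adv_invariant s" and v: "v \<in> alive s"
    and ne: "alive (adv_step s v) \<noteq> {}" and u: "u \<in> V - alive (adv_step s v)"
  shows "\<exists>w\<in>V. E u w \<and>
           (w \<in> alive (adv_step s v) \<or> height (adv_step s v) u < height (adv_step s v) w)"
proof -
  define R R' where "R = alive s" and "R' = alive (adv_step s v)"
  note D = adv_invariantD[OF I, folded R_def]
  let ?h' = "height (adv_step s v)"
  obtain c0 where R'_comp: "R' = component_within E (R - {v}) c0"
    unfolding R'_def R_def adv_step_inside(1)[OF v] largest_component_def by blast
  have R'_sub: "R' \<subseteq> R - {v}" using adv_step_alive_subset unfolding R_def R'_def .
  have h': "?h' x = (if x \<in> R - R' then real (clock s) + 1 / (real (dist_within E (R - R') x v) + 1)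
                     else height s x)" for x
    using adv_step_inside(4)[OF v] unfolding R_def R'_def .
  show ?thesis
  proof (cases "u \<in> R - R'")
    case True
    from cut_discarded_ascent[where E = E, OF sym_E D(5) R'_comp ne[folded R'_def] v[folded R_def] True]
    obtain w where w: "w \<in> R" "E u w"
      "w \<in> R' \<or> w \<in> R - R' \<and> dist_within E (R - R') w v < dist_within E (R - R') u v"
      by blast
    moreover have "1 / (real a + 1) < 1 / (real b + 1)" if "b < a" for a b :: nat
      using that by (simp add: field_simps)
    ultimately have "w \<in> R' \<or> ?h' u < ?h' w" using True by (auto simp: h')
    then show ?thesis using w D(1) unfolding R'_def by blast
  next
    case False
    then have uR: "u \<in> V - R" using u unfolding R'_def by blast
    obtain w where w: "w \<in> V" "E u w" "w \<in> R \<or> height s u < height s w"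
      using D(8) uR v unfolding R_def by blast
    have "height s u \<le> real (clock s)" using D(7) uR by blast
    moreover have "0 < 1 / (real d + 1)" for d :: nat by simp
    ultimately have "height s u < real (clock s) + 1 / (real d + 1)" for d :: nat
      by (smt (verit))
    then have "w \<in> R' \<or> ?h' u < ?h' w"
      using w uR R'_sub by (cases "w \<in> R") (auto simp: h')
    then show ?thesis using w unfolding R'_def by blast
  qed
qed

lemma adv_invariant_step_inside:
  assumes I: "adv_invariant s" and v: "v \<in> alive s"
  shows "adv_invariant (adv_step s v)"
proof -
  define R R' where "R = alive s" and "R' = alive (adv_step s v)"
  note D = adv_invariantD[OF I, folded R_def]
  have R': "R' = largest_component E (R - {v})" unfolding R'_def R_def adv_step_inside(1)[OF v] ..
  obtain c0 where R'_comp: "R' = component_within E (R - {v}) c0"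
    unfolding R' largest_component_def by blast
  have R'_sub: "R' \<subseteq> R - {v}" using adv_step_alive_subset unfolding R_def R'_def .
  have finR: "finite R" using D(1) finite_V finite_subset by blast
  have finQ: "finite (queried s)" using D(2) finite_V finite_subset by blast
  note step = adv_step_inside[OF v, folded R_def R'_def]
  show ?thesis
  proof (rule adv_invariantI, unfold step(2,3) R'_def[symmetric])
    show "R' \<subseteq> V" using R'_sub D(1) by blast
    show "insert v (queried s) \<subseteq> V" using D(1,2) v unfolding R_def by blast
    show "R' \<inter> insert v (queried s) = {}" using R'_sub D(3) by blast
    show "card (insert v (queried s)) \<le> Suc (clock s)" using D(4) finQ by (simp add: card_insert_if)
    show "reachable_within E R' x y" if "x \<in> R'" "y \<in> R'" for x y
      using reachable_within_component[where E = E, OF sym_E] that unfolding R'_comp by blast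
    show "y \<in> R' \<or> y \<in> insert v (queried s)" if "x \<in> R'" "y \<in> V" "E x y" for x y
      using D(6)[of x y] that R'_sub component_within_closed[of x E "R - {v}" c0 y]
      unfolding R'_comp by blast
    show "0 < height (adv_step s v) u \<and> height (adv_step s v) u \<le> real (Suc (clock s))"
      if "u \<in> V - R'" for u
      using D(7)[of u] that by (auto simp: step(4) add_nonneg_pos)
    show "\<exists>w\<in>V. E u w \<and> (w \<in> R' \<or> height (adv_step s v) u < height (adv_step s v) w)"
      if "R' \<noteq> {}" "u \<in> V - R'" for u
      using adv_step_inside_ascent[OF I v] that unfolding R'_def by blast
    show "\<exists>Q. balanced_separator V E Q \<and> card Q \<le> Suc (clock s)" if "2 * card R' \<le> card V"
    proof (cases "2 * card R \<le> card V")
      case True then show ?thesis using D(9) le_SucI by blast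
    next
      case False
      have "2 * card (component_within E (R - {v}) c) \<le> card V" if "c \<in> R - {v}" for c
        using card_component_le_largest[of "R - {v}" c E] finR that \<open>2 * card R' \<le> card V\<close>
        unfolding R' by simp
      then have "balanced_separator V E (insert v (queried s))"
        using balanced_separator_insert_cut_vertex[where E = E, OF finite_V sym_E D(1)] D(2,6) v False
        unfolding R_def by fastforce
      then show ?thesis using D(4) finQ by (auto simp: card_insert_if)
    qed
  qed
qed

lemma adv_invariant_step: "adv_invariant s \<Longrightarrow> adv_invariant (adv_step s v)"
  using adv_invariant_step_inside adv_invariant_step_outside by blast

lemma adv_run_invariant: "adv_invariant s \<Longrightarrow> adv_invariant (snd (adv_run T s))"
  by (induction T arbitrary: s) (simp_all add: adv_invariant_step)

lemma adv_run_fixes_outside: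
  "alive (snd (adv_run T s)) \<subseteq> alive s \<and>
   (\<forall>u. u \<notin> alive s \<longrightarrow> height (snd (adv_run T s)) u = height s u)"
proof (induction T arbitrary: s)
  case (Query v g)
  let ?s' = "adv_step s v"
  have "alive (snd (adv_run (g (height ?s' v)) ?s')) \<subseteq> alive ?s' \<and>
      (\<forall>u. u \<notin> alive ?s' \<longrightarrow> height (snd (adv_run (g (height ?s' v)) ?s')) u = height ?s' u)"
    using Query.IH by simp
  then show ?case using adv_step_alive_subset[of s v] adv_step_height_fixed[of _ s v] by auto
qed simp

lemma adv_run_consistent:
  assumes "\<And>u. u \<notin> alive (snd (adv_run T s)) \<Longrightarrow> f u = height (snd (adv_run T s)) u"
  shows "qt_result T f = fst (adv_run T s) \<and> qt_cost T f + clock s = clock (snd (adv_run T s))"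
  using assms
proof (induction T arbitrary: s)
  case (Query v g)
  let ?s' = "adv_step s v"
  let ?T' = "g (height ?s' v)"
  have "v \<notin> alive ?s'" using adv_step_alive_subset by blast
  then have "v \<notin> alive (snd (adv_run ?T' ?s'))" "height (snd (adv_run ?T' ?s')) v = height ?s' v"
    using adv_run_fixes_outside[of ?T' ?s'] by auto
  then have "f v = height ?s' v" using Query.prems by simp
  moreover have "qt_result ?T' f = fst (adv_run ?T' ?s') \<and>
      qt_cost ?T' f + clock ?s' = clock (snd (adv_run ?T' ?s'))"
  proof (rule Query.IH)
    show "?T' \<in> range g" by simp
    show "f u = height (snd (adv_run ?T' ?s')) u" if "u \<notin> alive (snd (adv_run ?T' ?s'))" for u
      using Query.prems that by simp
  qed
  ultimately show ?case by (simp add: adv_step_clock)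
qed simp

lemma adv_invariant_init: "adv_invariant adv_init"
proof (rule adv_invariantI)
  show "2 * card (alive adv_init) \<le> card V \<Longrightarrow> \<exists>Q. balanced_separator V E Q \<and> card Q \<le> clock adv_init"
    using finite_V V_nonempty by (simp add: adv_init_def card_gt_0_iff)
qed (auto simp: adv_init_def connected)

text \<open>Inside the alive region the completion rises towards some alive vertex other than the
  output \<open>a\<close>; if \<open>a\<close> is the only alive vertex it gets height \<open>0\<close>, below its neighbours, whose
  heights are already fixed and positive.\<close>

definition adv_completion :: "'v adversary \<Rightarrow> 'v \<Rightarrow> 'v \<Rightarrow> real" where
  "adv_completion s a u =
     (if u \<notin> alive s then height s u
      else if alive s = {a} then 0
      else real (clock s) + 1
             + 1 / (real (dist_within E (alive s) u (SOME r. r \<in> alive s \<and> r \<noteq> a)) + 1))"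

lemma adv_completion_not_local_max:
  assumes I: "adv_invariant s" and ne: "alive s \<noteq> {}"
  shows "\<not> is_local_max V E (adv_completion s a) a"
proof
  assume "is_local_max V E (adv_completion s a) a"
  then have aV: "a \<in> V" and le: "\<And>b. b \<in> V \<Longrightarrow> E a b \<Longrightarrow> adv_completion s a b \<le> adv_completion s a a"
    unfolding is_local_max_def by auto
  note D = adv_invariantD[OF I]
  let ?f = "adv_completion s a"
  have above: "height s u < ?f w" if "u \<in> V - alive s" "w \<in> alive s" "alive s \<noteq> {a}" for u w
  proof -
    have "height s u \<le> real (clock s)" using D(7) that(1) by blast
    moreover have "0 < 1 / (real d + 1)" for d :: nat by simp
    ultimately have "height s u < real (clock s) + 1 + 1 / (real d + 1)" for d :: nat
      by (smt (verit))
    then show ?thesis using that by (simp add: adv_completion_def)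
  qed
  consider "a \<notin> alive s" | "alive s = {a}" | "a \<in> alive s" "alive s \<noteq> {a}" by blast
  then show False
  proof cases
    case 1
    then obtain w where w: "w \<in> V" "E a w" "w \<in> alive s \<or> height s a < height s w"
      using D(8) ne aV by blast
    have "alive s \<noteq> {a}" using 1 by blast
    then have "?f a < ?f w" using above[of a w] 1 aV w(3)
      by (cases "w \<in> alive s") (simp_all add: adv_completion_def)
    then show False using le[OF w(1,2)] by simp
  next
    case 2
    obtain w where w: "w \<in> V" "E a w" "w \<noteq> a" using has_neighbour[OF aV] by blast
    then have "0 < ?f w" using D(7)[of w] 2 by (simp add: adv_completion_def)
    moreover have "?f a = 0" using 2 by (simp add: adv_completion_def)
    ultimately show False using le[OF w(1,2)] by simp
  next
    case 3
    define r where "r = (SOME r. r \<in> alive s \<and> r \<noteq> a)"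
    have "\<exists>r. r \<in> alive s \<and> r \<noteq> a" using 3 by blast
    then have r: "r \<in> alive s" "r \<noteq> a" unfolding r_def by (metis (mono_tags, lifting) someI_ex)+
    have "reachable_within E (alive s) a r" using D(5) 3(1) r(1) by blast
    from dist_within_decreasing_neighbour[OF this r(2)[symmetric]]
    obtain b where b: "b \<in> alive s" "E a b" "dist_within E (alive s) b r < dist_within E (alive s) a r"
      by blast
    have "1 / (real x + 1) < 1 / (real y + 1)" if "y < x" for x y :: nat
      using that by (simp add: field_simps)
    then have "?f a < ?f b" using b 3 unfolding adv_completion_def r_def[symmetric] by simp
    moreover have "b \<in> V" using b(1) D(1) by blast
    ultimately show False using le[OF _ b(2)] by fastforce
  qed
qed

theorem correct_algorithm_finds_balanced_separator:
  assumes correct: "\<And>f. is_local_max V E f (qt_result T f)"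
  shows "\<exists>Q f. balanced_separator V E Q \<and> card Q \<le> qt_cost T f"
proof -
  obtain a s where run: "adv_run T adv_init = (a, s)" by fastforce
  have I: "adv_invariant s" using adv_run_invariant[OF adv_invariant_init, of T] run by simp
  have "alive s = {}"
  proof (rule ccontr)
    assume ne: "alive s \<noteq> {}"
    have "qt_result T (adv_completion s a) = fst (adv_run T adv_init)"
      using adv_run_consistent[of T adv_init "adv_completion s a"] run
      by (simp add: adv_completion_def)
    then have "qt_result T (adv_completion s a) = a" using run by simp
    then show False using adv_completion_not_local_max[OF I ne, of a] correct[of "adv_completion s a"]
      by simp
  qed
  then obtain Q where Q: "balanced_separator V E Q" "card Q \<le> clock s"
    using adv_invariantD(9)[OF I] by auto
  have "qt_cost T (height s) + clock adv_init = clock s"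
    using adv_run_consistent[of T adv_init "height s"] run by simp
  then have "card Q \<le> qt_cost T (height s)" using Q(2) by (simp add: adv_init_def)
  then show ?thesis using Q(1) by blast
qed

end

text \<open>Querying every vertex and answering the highest one is correct, so the \<open>LEAST\<close> in
  \<open>D_LS\<close> is taken over a nonempty set.\<close>

definition best_answer :: "('v \<times> real) list \<Rightarrow> 'v" where
  "best_answer ps = fst (SOME p. p \<in> set ps \<and> (\<forall>q\<in>set ps. snd q \<le> snd p))"

primrec query_all :: "'v list \<Rightarrow> ('v \<times> real) list \<Rightarrow> 'v qtree" where
  "query_all [] ps = Output (best_answer ps)"
| "query_all (v # vs) ps = Query v (\<lambda>x. query_all vs (ps @ [(v, x)]))"

lemma query_all_run:
  "qt_result (query_all vs ps) f = best_answer (ps @ map (\<lambda>v. (v, f v)) vs) \<and>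
   qt_cost (query_all vs ps) f = length vs"
  by (induction vs arbitrary: ps) auto

lemma best_answer:
  assumes "ps \<noteq> []"
  shows "\<exists>p\<in>set ps. (\<forall>q\<in>set ps. snd q \<le> snd p) \<and> best_answer ps = fst p"
proof -
  have fin: "finite (snd ` set ps)" "snd ` set ps \<noteq> {}" using assms by auto
  obtain p where p: "p \<in> set ps" "snd p = Max (snd ` set ps)" using Max_in[OF fin] by auto
  moreover have "\<forall>q\<in>set ps. snd q \<le> snd p" using p(2) Max_ge[OF fin(1)] by simp
  ultimately have "\<exists>p. p \<in> set ps \<and> (\<forall>q\<in>set ps. snd q \<le> snd p)" by blast
  from someI_ex[OF this] show ?thesis unfolding best_answer_def by blast
qed

lemma correct_algorithm_exists:
  assumes "finite V" "V \<noteq> {}"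
  shows "\<exists>q T. (\<forall>f. is_local_max V E f (qt_result T f)) \<and> (\<forall>f. qt_cost T f \<le> q)"
proof -
  obtain vs where vs: "set vs = V" using finite_list[OF assms(1)] by blast
  have "is_local_max V E f (qt_result (query_all vs []) f)" for f
  proof -
    let ?ps = "map (\<lambda>v. (v, f v)) vs"
    have "?ps \<noteq> []" using vs assms(2) by auto
    then obtain p where "p \<in> set ?ps" "\<forall>q\<in>set ?ps. snd q \<le> snd p" "best_answer ?ps = fst p"
      using best_answer by blast
    then show ?thesis using vs query_all_run[of vs "[]" f] unfolding is_local_max_def by auto
  qed
  moreover have "qt_cost (query_all vs []) f \<le> length vs" for f using query_all_run[of vs "[]" f] by simp
  ultimately show ?thesis by blast
qed

lemma (in connected_graph) balanced_separator_le_D_LS: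
  "\<exists>Q. balanced_separator V E Q \<and> card Q \<le> D_LS V E"
proof -
  from LeastI_ex[OF correct_algorithm_exists[OF finite_V V_nonempty]]
  obtain T where T: "\<And>f. is_local_max V E f (qt_result T f)" "\<And>f. qt_cost T f \<le> D_LS V E"
    unfolding D_LS_def by blast
  obtain Q f where "balanced_separator V E Q" "card Q \<le> qt_cost T f"
    using correct_algorithm_finds_balanced_separator[OF T(1)] by blast
  then show ?thesis using T(2)[of f] by (intro exI[of _ Q]) simp
qed

section \<open>Balanced separators of the odd graph\<close>

definition arrangements :: "'a set \<Rightarrow> nat \<Rightarrow> 'a list set" where
  "arrangements S r = {xs. length xs = r \<and> distinct xs \<and> set xs \<subseteq> S}"

lemma finite_arrangements: "finite S \<Longrightarrow> finite (arrangements S r)"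
  unfolding arrangements_def
  by (rule finite_subset[OF _ finite_lists_length_eq[of S r]]) auto

lemma card_arrangements:
  assumes "finite S" "r \<le> card S"
  shows "card (arrangements S r) * fact (card S - r) = fact (card S)"
proof -
  have "card (arrangements S r) = \<Prod>{card S - r + 1 .. card S}"
    unfolding arrangements_def by (rule card_lists_distinct_length_eq[OF assms])
  also have "\<dots> = fact (card S) div fact (card S - r)"
    using fact_div_fact[of "card S - r" "card S"] by simp
  finally show ?thesis by (simp add: fact_dvd)
qed

lemma card_arrangements_le:
  assumes "finite S"
  shows "card (arrangements S r) * fact (card S - r) \<le> fact (card S)"
proof (cases "r \<le> card S")
  case True then show ?thesis using card_arrangements[OF assms] by simp
next
  case False
  have "arrangements S r = {}"
  proof (rule equals0I)
    fix xs assume "xs \<in> arrangements S r"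
    then have "card (set xs) = r" "set xs \<subseteq> S" by (auto simp: arrangements_def distinct_card)
    then show False using False card_mono[OF assms] by fastforce
  qed
  then show ?thesis by simp
qed

lemma set_arrangement_card:
  assumes "finite S" "xs \<in> arrangements S (card S)"
  shows "set xs = S"
proof -
  have "set xs \<subseteq> S" "card (set xs) = card S"
    using assms(2) by (auto simp: arrangements_def distinct_card)
  then show ?thesis using card_subset_eq[OF assms(1)] by blast
qed

lemma card_le_by_arrangements:
  assumes inj: "inj_on \<phi> F" and img: "\<phi> ` F \<subseteq> arrangements S a \<times> arrangements T b"
    and fin: "finite S" "finite T"
  shows "card F * (fact (card S - a) * fact (card T - b)) \<le> fact (card S) * fact (card T)"
proof -
  have "card F \<le> card (arrangements S a) * card (arrangements T b)"
    using card_inj_on_le[OF inj img] fin by (simp add: finite_arrangements card_cartesian_product)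
  then have "card F * (fact (card S - a) * fact (card T - b)) \<le>
      (card (arrangements S a) * fact (card S - a)) * (card (arrangements T b) * fact (card T - b))"
    by (metis (no_types, lifting) mult.assoc mult.left_commute mult_le_mono1)
  also have "\<dots> \<le> fact (card S) * fact (card T)"
    using card_arrangements_le[OF fin(1)] card_arrangements_le[OF fin(2)] by (rule mult_le_mono)
  finally show ?thesis .
qed

lemma sum_binomial_product_odd: "(\<Sum>r\<le>k. (k choose r) * (Suc k choose r)) = (2 * k + 1) choose k"
proof -
  have "(\<Sum>r\<le>k. (k choose r) * (Suc k choose r)) = (\<Sum>r\<le>Suc k. (k choose r) * (Suc k choose r))"
    by simp
  also have "\<dots> = (\<Sum>r\<le>Suc k. (k choose r) * (Suc k choose (Suc k - r)))"
    by (rule sum.cong) (auto simp: binomial_symmetric[symmetric])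
  also have "\<dots> = (k + Suc k) choose Suc k" by (rule vandermonde)
  also have "\<dots> = (2 * k + 1) choose k"
    using binomial_symmetric[of k "2 * k + 1"] by (simp add: mult_2 del: binomial_Suc_Suc)
  finally show ?thesis .
qed

lemma fact_mult_fact_Suc:
  assumes "r \<le> k"
  shows "fact k * fact (Suc k)
    = (fact r * fact r * ((k choose r) * (Suc k choose r))) * (fact (k - r) * fact (Suc k - r))"
proof -
  have "fact r * fact (k - r) * (k choose r) = fact k"
    "fact r * fact (Suc k - r) * (Suc k choose r) = fact (Suc k)"
    using binomial_fact_lemma[of r k] binomial_fact_lemma[of r "Suc k"] assms by simp_all
  then have "fact k * fact (Suc k) = (fact r * fact (k - r) * (k choose r))
      * (fact r * fact (Suc k - r) * (Suc k choose r))" by simp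
  then show ?thesis by (simp only: mult_ac)
qed

lemma separator_size_arith:
  fixes n q c :: nat
  assumes "q \<le> n" "1 \<le> c" and pairs: "(n - q) * (2 * (n - q) - n) \<le> 2 * (c * q * n)"
  shows "3 * n \<le> 16 * c * q"
proof (cases "n \<le> 4 * q")
  case True
  have "q \<le> c * q" using \<open>1 \<le> c\<close> by simp
  then show ?thesis using True by linarith
next
  case False
  then have "real (n - q) * real (2 * (n - q) - n) = (real n - real q) * (real n - 2 * real q)"
    using \<open>q \<le> n\<close> by (simp add: of_nat_diff)
  moreover have "(3 * real n / 4) * (real n / 2) \<le> (real n - real q) * (real n - 2 * real q)"
    using False by (intro mult_mono) auto
  moreover have "real ((n - q) * (2 * (n - q) - n)) \<le> 2 * (real c * real q * real n)"
    using pairs by (metis of_nat_le_iff of_nat_mult of_nat_numeral)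
  ultimately have "3 * real n * real n \<le> 16 * (real c * real q) * real n" by simp
  moreover have "real n > 0" using False by simp
  ultimately have "real (3 * n) \<le> real (16 * c * q)" by simp
  then show ?thesis by linarith
qed

locale odd_graph =
  fixes k :: nat
  assumes k_pos: "0 < k"
begin

abbreviation "U \<equiv> {..<2*k+1}"
abbreviation "VV \<equiv> kneser_vertices (2*k+1) k"

lemma finite_VV: "finite VV"
  unfolding kneser_vertices_def by (rule finite_subset[of _ "Pow U"]) auto

lemma card_VV: "card VV = (2 * k + 1) choose k"
  unfolding kneser_vertices_def using n_subsets[of U k] by simp

lemma VV_memD: "A \<in> VV \<Longrightarrow> A \<subseteq> U \<and> finite A \<and> card A = k"
  unfolding kneser_vertices_def by (auto intro: finite_subset)

definition exchange_data :: "nat \<Rightarrow> (nat set \<times> nat list \<times> nat list) set" where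
  "exchange_data r =
     {(A, as, bs). A \<in> VV \<and> as \<in> arrangements A r \<and> bs \<in> arrangements (U - A) r}"

definition exchange :: "nat set \<Rightarrow> nat list \<Rightarrow> nat list \<Rightarrow> nat \<Rightarrow> nat \<Rightarrow> nat set" where
  "exchange A as bs i j = (A - set (take i as)) \<union> set (take j bs)"

text \<open>A walk of length \<open>2 r\<close> from \<open>A\<close> to \<open>(A - set as) \<union> set bs\<close>: its vertex \<open>2 j\<close> is \<open>A\<close>
  with the first \<open>j\<close> elements of \<open>as\<close> exchanged for the first \<open>j\<close> elements of \<open>bs\<close>, and
  its vertex \<open>2 j + 1\<close> is the complement of the union of the vertices \<open>2 j\<close> and \<open>2 j + 2\<close>.\<close>

definition exchange_path :: "nat set \<Rightarrow> nat list \<Rightarrow> nat list \<Rightarrow> nat \<Rightarrow> nat set" where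
  "exchange_path A as bs m =
     (if even m then exchange A as bs (m div 2) (m div 2)
      else U - exchange A as bs (m div 2) (Suc (m div 2)))"

lemma exchange_dataD:
  assumes "(A, as, bs) \<in> exchange_data r"
  shows "A \<in> VV" "length as = r" "distinct as" "set as \<subseteq> A"
    "length bs = r" "distinct bs" "set bs \<subseteq> U - A"
  using assms unfolding exchange_data_def arrangements_def by auto

lemma exchange_subset:
  assumes d: "(A, as, bs) \<in> exchange_data r"
  shows "exchange A as bs i j \<subseteq> U"
proof -
  have "A \<subseteq> U" "set bs \<subseteq> U - A"
    using VV_memD exchange_dataD[OF d] by blast+
  then show ?thesis unfolding exchange_def using set_take_subset[of j bs] by blast
qed

lemma exchange_mono: "i' \<le> i \<Longrightarrow> j \<le> j' \<Longrightarrow> exchange A as bs i j \<subseteq> exchange A as bs i' j'"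
  unfolding exchange_def using set_take_subset_set_take[of i' i as] set_take_subset_set_take[of j j' bs]
  by blast

lemma exchange_recover:
  assumes d: "(A, as, bs) \<in> exchange_data r"
  shows "A = (exchange A as bs i j - set (take j bs)) \<union> set (take i as)"
proof -
  have "set (take i as) \<subseteq> A" "set (take j bs) \<inter> A = {}"
    using exchange_dataD[OF d] set_take_subset[of i as] set_take_subset[of j bs] by blast+
  then show ?thesis unfolding exchange_def by blast
qed

lemma card_exchange:
  assumes d: "(A, as, bs) \<in> exchange_data r" and "i \<le> r" "j \<le> r"
  shows "card (exchange A as bs i j) = k - i + j"
proof -
  note D = exchange_dataD[OF d] and A = VV_memD[OF D(1)]
  have as: "set (take i as) \<subseteq> A" "card (set (take i as)) = i"
    using D(2-4) \<open>i \<le> r\<close> set_take_subset[of i as] distinct_card[of "take i as"] by auto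
  have bs: "set (take j bs) \<inter> A = {}" "card (set (take j bs)) = j"
    using D(5-7) \<open>j \<le> r\<close> set_take_subset[of j bs] distinct_card[of "take j bs"] by auto
  have "card (exchange A as bs i j) = card (A - set (take i as)) + card (set (take j bs))"
    unfolding exchange_def using A bs(1) by (intro card_Un_disjoint) auto
  also have "\<dots> = k - i + j" using as bs A by (simp add: card_Diff_subset finite_subset)
  finally show ?thesis .
qed

lemma exchange_data_le: "(A, as, bs) \<in> exchange_data r \<Longrightarrow> r \<le> k"
  using exchange_dataD[of A as bs r] VV_memD[of A] card_mono[of A "set as"] distinct_card[of as]
  by fastforce

lemma exchange_path_vertex:
  assumes d: "(A, as, bs) \<in> exchange_data r" and m: "m \<le> 2 * r"
  shows "exchange_path A as bs m \<in> VV"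
proof (cases "even m")
  case True
  have "m div 2 \<le> k" using m exchange_data_le[OF d] by simp
  then show ?thesis
    using True m card_exchange[OF d] exchange_subset[OF d]
    unfolding exchange_path_def kneser_vertices_def by simp
next
  case False
  let ?W = "exchange A as bs (m div 2) (Suc (m div 2))"
  have "Suc (m div 2) \<le> r" using m False by presburger
  then have "card ?W = Suc k" using card_exchange[OF d] exchange_data_le[OF d] by simp
  moreover have "card (U - ?W) = card U - card ?W"
    using exchange_subset[OF d] by (intro card_Diff_subset) (auto intro: finite_subset)
  ultimately have "card (U - ?W) = k" by simp
  then show ?thesis using False unfolding exchange_path_def kneser_vertices_def by simp
qed

lemma exchange_path_adj: "kneser_adj (exchange_path A as bs m) (exchange_path A as bs (Suc m))"
proof (cases "even m")
  case True
  then have "Suc m div 2 = m div 2" by presburger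
  then show ?thesis using True exchange_mono[of "m div 2" "m div 2" "m div 2" "Suc (m div 2)" A as bs]
    unfolding exchange_path_def kneser_adj_def by auto
next
  case False
  then have "Suc m div 2 = Suc (m div 2)" by presburger
  then show ?thesis using False exchange_mono[of "m div 2" "Suc (m div 2)" "Suc (m div 2)" "Suc (m div 2)" A as bs]
    unfolding exchange_path_def kneser_adj_def by auto
qed

lemma exchange_path_end:
  "(A, as, bs) \<in> exchange_data r \<Longrightarrow> exchange_path A as bs (2 * r) = (A - set as) \<union> set bs"
  using exchange_dataD[of A as bs r] unfolding exchange_path_def exchange_def by simp

lemma reachable_along_exchange_path:
  assumes d: "(A, as, bs) \<in> exchange_data r" and avoid: "\<forall>m\<le>2*r. exchange_path A as bs m \<notin> Q"
  shows "reachable_within kneser_adj (VV - Q) A ((A - set as) \<union> set bs)"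
proof -
  have "reachable_within kneser_adj (VV - Q) A (exchange_path A as bs m)" if "m \<le> 2 * r" for m
    using that
  proof (induction m)
    case 0 then show ?case by (simp add: exchange_path_def exchange_def)
  next
    case (Suc m)
    have "edge_within kneser_adj (VV - Q) (exchange_path A as bs m) (exchange_path A as bs (Suc m))"
      using exchange_path_vertex[OF d] avoid exchange_path_adj Suc.prems
      unfolding edge_within_def by simp
    then show ?case using Suc by (simp add: reachable_within_def)
  qed
  then show ?thesis using exchange_path_end[OF d] by fastforce
qed

lemma exchange_split_arrangements:
  assumes d: "(A, as, bs) \<in> exchange_data r" and "i \<le> r" "j \<le> r"
  shows "take j bs @ drop i as \<in> arrangements (exchange A as bs i j) (j + (r - i))"
    and "take i as @ drop j bs \<in> arrangements (U - exchange A as bs i j) (i + (r - j))"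
proof -
  note D = exchange_dataD[OF d]
  have A: "A \<subseteq> U" using VV_memD D(1) by blast
  have as: "set (take i as) \<subseteq> A" "set (drop i as) \<subseteq> A" "set (take i as) \<inter> set (drop i as) = {}"
    using D(3,4) set_take_subset[of i as] set_drop_subset[of i as]
      set_take_disj_set_drop_if_distinct[of as i i] by auto
  have bs: "set (take j bs) \<subseteq> U - A" "set (drop j bs) \<subseteq> U - A"
    "set (take j bs) \<inter> set (drop j bs) = {}"
    using D(6,7) set_take_subset[of j bs] set_drop_subset[of j bs]
      set_take_disj_set_drop_if_distinct[of bs j j] by auto
  show "take j bs @ drop i as \<in> arrangements (exchange A as bs i j) (j + (r - i))"
    using as bs D \<open>j \<le> r\<close> unfolding arrangements_def exchange_def by auto
  show "take i as @ drop j bs \<in> arrangements (U - exchange A as bs i j) (i + (r - j))"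
    using as bs D A \<open>i \<le> r\<close> unfolding arrangements_def exchange_def by auto
qed

text \<open>Swapping the prefixes of \<open>as\<close> and \<open>bs\<close> encodes a triple of the fibre over \<open>W\<close> by an
  arrangement of \<open>W\<close> and one of its complement, from which the triple can be read back.\<close>

lemma card_exchange_fiber:
  assumes "i \<le> r" "j \<le> r" "W \<subseteq> U"
  shows "card {(A, as, bs). (A, as, bs) \<in> exchange_data r \<and> exchange A as bs i j = W}
           * (fact (card W - (j + (r - i))) * fact (card (U - W) - (i + (r - j))))
         \<le> fact (card W) * fact (card (U - W))"
proof (rule card_le_by_arrangements)
  let ?F = "{(A, as, bs). (A, as, bs) \<in> exchange_data r \<and> exchange A as bs i j = W}"
  let ?\<phi> = "\<lambda>(A::nat set, as::nat list, bs::nat list). (take j bs @ drop i as, take i as @ drop j bs)"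
  show "inj_on ?\<phi> ?F"
  proof (rule inj_onI)
    fix x y assume x: "x \<in> ?F" and y: "y \<in> ?F" and eq: "?\<phi> x = ?\<phi> y"
    obtain A as bs A' as' bs' where xy: "x = (A, as, bs)" "y = (A', as', bs')"
      by (cases x, cases y) blast
    have d: "(A, as, bs) \<in> exchange_data r" "exchange A as bs i j = W"
      and d': "(A', as', bs') \<in> exchange_data r" "exchange A' as' bs' i j = W"
      using x y unfolding xy by auto
    note eq = eq[unfolded xy]
    have "length (take j bs) = length (take j bs')" "length (take i as) = length (take i as')"
      using exchange_dataD(2,5)[OF d(1)] exchange_dataD(2,5)[OF d'(1)] by simp_all
    then have "take j bs = take j bs'" "drop i as = drop i as'"
      "take i as = take i as'" "drop j bs = drop j bs'"
      using eq by simp_all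
    then have "as = as'" "bs = bs'" by (metis append_take_drop_id)+
    moreover have "A = A'"
      using exchange_recover[OF d(1), of i j] exchange_recover[OF d'(1), of i j] d(2) d'(2) calculation
      by simp
    ultimately show "x = y" unfolding xy by simp
  qed
  show "?\<phi> ` ?F \<subseteq> arrangements W (j + (r - i)) \<times> arrangements (U - W) (i + (r - j))"
    using exchange_split_arrangements assms(1,2) by fastforce
  show "finite W" "finite (U - W)" using assms(3) finite_subset by auto
qed

lemma finite_exchange_data: "finite (exchange_data r)"
proof (rule finite_subset)
  show "exchange_data r \<subseteq> VV \<times> arrangements U r \<times> arrangements U r"
    unfolding exchange_data_def arrangements_def kneser_vertices_def by auto
  show "finite (VV \<times> arrangements U r \<times> arrangements U r)"
    using finite_VV finite_arrangements[of U r] by simp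
qed

lemma card_exchange_path_fiber:
  assumes r: "r \<le> k" and m: "m \<le> 2 * r" and v: "v \<in> VV"
  shows "card {(A, as, bs). (A, as, bs) \<in> exchange_data r \<and> exchange_path A as bs m = v}
           \<le> fact r * fact r * ((k choose r) * (Suc k choose r))"
proof -
  let ?F = "{(A, as, bs). (A, as, bs) \<in> exchange_data r \<and> exchange_path A as bs m = v}"
  let ?j = "m div 2"
  have v': "v \<subseteq> U" "card v = k" "card (U - v) = Suc k" "U - (U - v) = v"
    using VV_memD[OF v] by (auto simp: card_Diff_subset)
  have "card ?F * (fact (k - r) * fact (Suc k - r)) \<le> fact k * fact (Suc k)"
  proof (cases "even m")
    case True
    then have "?F = {(A, as, bs). (A, as, bs) \<in> exchange_data r \<and> exchange A as bs ?j ?j = v}"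
      unfolding exchange_path_def by simp
    then show ?thesis using card_exchange_fiber[of ?j r ?j v] m v' by simp
  next
    case False
    then have j: "Suc ?j \<le> r" using m by presburger
    have iff: "(exchange_path A as bs m = v) = (exchange A as bs ?j (Suc ?j) = U - v)"
      if "(A, as, bs) \<in> exchange_data r" for A as bs
      using exchange_subset[OF that, of ?j "Suc ?j"] v'(1) False unfolding exchange_path_def by auto
    have "?F = {(A, as, bs). (A, as, bs) \<in> exchange_data r \<and> exchange A as bs ?j (Suc ?j) = U - v}"
    proof (rule set_eqI)
      fix d :: "nat set \<times> nat list \<times> nat list"
      obtain A as bs where "d = (A, as, bs)" by (cases d)
      then show "d \<in> ?F \<longleftrightarrow>
          d \<in> {(A, as, bs). (A, as, bs) \<in> exchange_data r \<and> exchange A as bs ?j (Suc ?j) = U - v}"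
        using iff[of A as bs] by auto
    qed
    moreover have "k - (?j + (r - Suc ?j)) = Suc k - r" "Suc k - (Suc ?j + (r - ?j)) = k - r"
      using j by auto
    ultimately show ?thesis using card_exchange_fiber[of ?j r "Suc ?j" "U - v"] j v'
      by (simp add: mult.commute)
  qed
  also have "fact k * fact (Suc k)
      = (fact r * fact r * ((k choose r) * (Suc k choose r))) * (fact (k - r) * fact (Suc k - r))"
    using fact_mult_fact_Suc[OF r] .
  finally show ?thesis by simp
qed

lemma card_Diff_VV:
  assumes "A \<in> VV" "B \<in> VV"
  shows "card (B - A) = card (A - B)"
proof -
  have "finite A" "finite B" "card A = card B" using VV_memD assms by auto
  then show ?thesis by (simp add: card_Diff_subset_Int Int_commute)
qed

lemma set_pair_arrangements:
  assumes AB: "A \<in> VV" "B \<in> VV"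
    and as: "as \<in> arrangements (A - B) (card (A - B))" and bs: "bs \<in> arrangements (B - A) (card (A - B))"
  shows "set as = A - B" "set bs = B - A"
proof -
  have fin: "finite (A - B)" "finite (B - A)" using VV_memD AB by auto
  show "set as = A - B" by (rule set_arrangement_card[OF fin(1) as])
  show "set bs = B - A" using set_arrangement_card[OF fin(2)] bs card_Diff_VV[OF AB] by simp
qed

lemma card_Sigma_pair_arrangements:
  assumes fin: "finite P" and P: "\<And>A B. (A, B) \<in> P \<Longrightarrow> A \<in> VV \<and> B \<in> VV \<and> card (A - B) = r"
  shows "card (Sigma P (\<lambda>(A, B). arrangements (A - B) r \<times> arrangements (B - A) r))
           = card P * (fact r * fact r)"
proof -
  let ?X = "\<lambda>(A, B). arrangements (A - B) r \<times> arrangements (B - A) r"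
  have X: "finite (?X p) \<and> card (?X p) = fact r * fact r" if "p \<in> P" for p
  proof -
    obtain A B where AB: "p = (A, B)" by (cases p)
    have AB': "A \<in> VV" "B \<in> VV" "card (A - B) = r" using P that unfolding AB by blast+
    have "finite (A - B)" "finite (B - A)" "card (B - A) = r"
      using VV_memD AB'(1,2) card_Diff_VV[OF AB'(1,2)] AB'(3) by auto
    then show ?thesis
      using card_arrangements[of "A - B" r] card_arrangements[of "B - A" r] AB'(3)
      unfolding AB by (simp add: card_cartesian_product finite_arrangements)
  qed
  then have "card (Sigma P ?X) = (\<Sum>p\<in>P. card (?X p))" using fin by (simp add: card_SigmaI)
  also have "\<dots> = card P * (fact r * fact r)" using X by simp
  finally show ?thesis .
qed

lemma exchange_path_meets_separator:
  assumes AB: "(A, B) \<in> separated_pairs kneser_adj (VV - Q)"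
    and as: "as \<in> arrangements (A - B) (card (A - B))" and bs: "bs \<in> arrangements (B - A) (card (A - B))"
  shows "(A, as, bs) \<in> exchange_data (card (A - B)) \<and>
         (\<exists>m\<le>2 * card (A - B). exchange_path A as bs m \<in> Q)"
proof -
  have A: "A \<in> VV" and B: "B \<in> VV" and sep: "\<not> reachable_within kneser_adj (VV - Q) A B"
    using AB unfolding separated_pairs_def by auto
  note sets = set_pair_arrangements[OF A B as bs]
  then have d: "(A, as, bs) \<in> exchange_data (card (A - B))"
    using as bs A VV_memD[OF B] unfolding exchange_data_def arrangements_def by auto
  have "(A - set as) \<union> set bs = B" using sets by blast
  then show ?thesis using reachable_along_exchange_path[OF d, of Q] sep d by auto
qed

lemma card_separated_pairs_at_le:
  "card {(A, B) \<in> separated_pairs kneser_adj (VV - Q). card (A - B) = r} * (fact r * fact r)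
     \<le> card {(A, as, bs). (A, as, bs) \<in> exchange_data r \<and> (\<exists>m\<le>2*r. exchange_path A as bs m \<in> Q)}"
  (is "card ?P * _ \<le> card ?M")
proof -
  let ?\<Sigma> = "Sigma ?P (\<lambda>(A, B). arrangements (A - B) r \<times> arrangements (B - A) r)"
  let ?g = "\<lambda>((A::nat set, B::nat set), as::nat list, bs::nat list). (A, as, bs)"
  have P: "A \<in> VV \<and> B \<in> VV \<and> card (A - B) = r" if "(A, B) \<in> ?P" for A B
    using that unfolding separated_pairs_def by auto
  have finP: "finite ?P"
    by (rule finite_subset[OF _ finite_cartesian_product[OF finite_VV finite_VV]])
      (auto simp: separated_pairs_def)
  have "card ?P * (fact r * fact r) = card ?\<Sigma>"
    using card_Sigma_pair_arrangements[OF finP P] by simp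
  also have "\<dots> = card (?g ` ?\<Sigma>)"
  proof (rule card_image[symmetric], rule inj_onI)
    fix x y assume xy: "x \<in> ?\<Sigma>" "y \<in> ?\<Sigma>" "?g x = ?g y"
    obtain A B as bs A' B' as' bs' where x: "x = ((A, B), as, bs)" and y: "y = ((A', B'), as', bs')"
      by (metis prod.exhaust)
    have recover: "B = (A - set as) \<union> set bs" if "((A, B), as, bs) \<in> ?\<Sigma>" for A B as bs
    proof -
      have mem: "(A, B) \<in> ?P" "as \<in> arrangements (A - B) r" "bs \<in> arrangements (B - A) r"
        using that by auto
      have "set as = A - B" "set bs = B - A"
        using set_pair_arrangements[of A B as bs] P[OF mem(1)] mem(2,3) by simp_all
      then show ?thesis by blast
    qed
    have "A = A'" "as = as'" "bs = bs'" using xy(3) unfolding x y by simp_all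
    moreover have "B = B'"
      using recover[OF xy(1)[unfolded x]] recover[OF xy(2)[unfolded y]] calculation by simp
    ultimately show "x = y" unfolding x y by simp
  qed
  also have "\<dots> \<le> card ?M"
  proof (rule card_mono)
    show "finite ?M" by (rule finite_subset[OF _ finite_exchange_data]) auto
    show "?g ` ?\<Sigma> \<subseteq> ?M"
    proof
      fix d assume "d \<in> ?g ` ?\<Sigma>"
      then obtain x where x: "x \<in> ?\<Sigma>" "d = ?g x" by blast
      obtain A B as bs where xAB: "x = ((A, B), as, bs)" by (metis prod.exhaust)
      have "(A, B) \<in> separated_pairs kneser_adj (VV - Q)" "card (A - B) = r"
        "as \<in> arrangements (A - B) r" "bs \<in> arrangements (B - A) r"
        using x(1) unfolding xAB by auto
      then show "d \<in> ?M" using exchange_path_meets_separator[of A B Q as bs] x(2) xAB by simp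
    qed
  qed
  finally show ?thesis .
qed

lemma card_exchange_data_meeting:
  assumes Q: "Q \<subseteq> VV" and r: "r \<le> k"
  shows "card {(A, as, bs). (A, as, bs) \<in> exchange_data r \<and> (\<exists>m\<le>2*r. exchange_path A as bs m \<in> Q)}
           \<le> (2 * r + 1) * card Q * (fact r * fact r * ((k choose r) * (Suc k choose r)))"
proof -
  let ?F = "\<lambda>m v. {(A, as, bs). (A, as, bs) \<in> exchange_data r \<and> exchange_path A as bs m = v}"
  let ?X = "fact r * fact r * ((k choose r) * (Suc k choose r))"
  have "{(A, as, bs). (A, as, bs) \<in> exchange_data r \<and> (\<exists>m\<le>2*r. exchange_path A as bs m \<in> Q)}
      = (\<Union>m\<in>{..2*r}. \<Union>v\<in>Q. ?F m v)"
    by auto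
  then have "card {(A, as, bs). (A, as, bs) \<in> exchange_data r \<and> (\<exists>m\<le>2*r. exchange_path A as bs m \<in> Q)}
      \<le> (\<Sum>m\<in>{..2*r}. card (\<Union>v\<in>Q. ?F m v))"
    by (simp add: card_UN_le)
  also have "\<dots> \<le> (\<Sum>m\<in>{..2*r}. \<Sum>v\<in>Q. card (?F m v))"
    using finite_subset[OF Q finite_VV] by (intro sum_mono card_UN_le)
  also have "\<dots> \<le> (\<Sum>m\<in>{..2*r}. \<Sum>v\<in>Q. ?X)"
    using card_exchange_path_fiber r Q by (intro sum_mono) auto
  also have "\<dots> = (2 * r + 1) * card Q * ?X" by (simp add: algebra_simps)
  finally show ?thesis .
qed

lemma card_separated_pairs_at:
  assumes Q: "Q \<subseteq> VV" and r: "r \<le> k"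
  shows "card {(A, B) \<in> separated_pairs kneser_adj (VV - Q). card (A - B) = r}
           \<le> (2 * r + 1) * card Q * ((k choose r) * (Suc k choose r))"
proof (rule mult_right_le_imp_le)
  have "card {(A, B) \<in> separated_pairs kneser_adj (VV - Q). card (A - B) = r} * (fact r * fact r)
      \<le> (2 * r + 1) * card Q * (fact r * fact r * ((k choose r) * (Suc k choose r)))"
    using card_separated_pairs_at_le[of Q r] card_exchange_data_meeting[OF Q r] by (rule order_trans)
  also have "\<dots> = ((2 * r + 1) * card Q * ((k choose r) * (Suc k choose r))) * (fact r * fact r)"
    by (simp only: mult_ac)
  finally show "card {(A, B) \<in> separated_pairs kneser_adj (VV - Q). card (A - B) = r} * (fact r * fact r)
      \<le> ((2 * r + 1) * card Q * ((k choose r) * (Suc k choose r))) * (fact r * fact r)" .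
qed simp

lemma card_separated_pairs:
  assumes Q: "Q \<subseteq> VV"
  shows "card (separated_pairs kneser_adj (VV - Q)) \<le> (2 * k + 1) * card Q * ((2 * k + 1) choose k)"
proof -
  have "card (A - B) \<le> k" if "(A, B) \<in> separated_pairs kneser_adj (VV - Q)" for A B
    using that VV_memD[of A] card_mono[of A "A - B"] unfolding separated_pairs_def by auto
  then have "separated_pairs kneser_adj (VV - Q)
      = (\<Union>r\<in>{..k}. {(A, B) \<in> separated_pairs kneser_adj (VV - Q). card (A - B) = r})"
    by auto
  then have "card (separated_pairs kneser_adj (VV - Q))
      = card (\<Union>r\<in>{..k}. {(A, B) \<in> separated_pairs kneser_adj (VV - Q). card (A - B) = r})"
    by (rule arg_cong)
  also have "\<dots> \<le> (\<Sum>r\<le>k. card {(A, B) \<in> separated_pairs kneser_adj (VV - Q). card (A - B) = r})"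
    by (rule card_UN_le) simp
  also have "\<dots> \<le> (\<Sum>r\<le>k. (2 * k + 1) * card Q * ((k choose r) * (Suc k choose r)))"
  proof (rule sum_mono)
    fix r assume "r \<in> {..k}"
    then show "card {(A, B) \<in> separated_pairs kneser_adj (VV - Q). card (A - B) = r}
        \<le> (2 * k + 1) * card Q * ((k choose r) * (Suc k choose r))"
      using card_separated_pairs_at[OF Q, of r] order_trans mult_le_mono1 by fastforce
  qed
  also have "\<dots> = (2 * k + 1) * card Q * ((2 * k + 1) choose k)"
    by (simp add: sum_distrib_left[symmetric] sum_binomial_product_odd del: binomial_Suc_Suc)
  finally show ?thesis .
qed

lemma connected_graph_odd: "connected_graph VV kneser_adj"
proof
  show "finite VV" by (rule finite_VV)
  show "kneser_adj x y \<Longrightarrow> kneser_adj y x" for x y unfolding kneser_adj_def by auto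
  show "VV \<noteq> {}" using card_VV by auto
  show "\<exists>w\<in>VV. kneser_adj v w \<and> w \<noteq> v" if v: "v \<in> VV" for v
  proof -
    have vU: "v \<subseteq> U" "card v = k" using VV_memD[OF v] by auto
    then have cc: "card (U - v) = Suc k" by (simp add: card_Diff_subset finite_subset)
    then obtain x where x: "x \<in> U - v" by (metis card.empty ex_in_conv nat.distinct(1))
    define w where "w = U - v - {x}"
    have "card w = k" unfolding w_def using cc x by simp
    then have "w \<in> VV" unfolding w_def kneser_vertices_def by auto
    moreover have "kneser_adj v w" unfolding kneser_adj_def w_def by auto
    moreover have "v \<noteq> {}" using vU k_pos by auto
    ultimately show ?thesis unfolding kneser_adj_def by auto
  qed
  show "reachable_within kneser_adj VV x y" if x: "x \<in> VV" and y: "y \<in> VV" for x y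
  proof -
    have fx: "finite x" "finite y" "card x = k" "card y = k" "y \<subseteq> U"
      using VV_memD[OF x] VV_memD[OF y] by auto
    obtain as where as: "set as = x - y" "distinct as" using finite_distinct_list[of "x - y"] fx(1) by auto
    obtain bs where bs: "set bs = y - x" "distinct bs" using finite_distinct_list[of "y - x"] fx(2) by auto
    have "card (x - y) = card (y - x)" using fx by (simp add: card_Diff_subset_Int Int_commute)
    then have "length as = length bs" using as bs distinct_card by metis
    then have d: "(x, as, bs) \<in> exchange_data (length as)"
      unfolding exchange_data_def arrangements_def using x as bs fx by auto
    have "(x - set as) \<union> set bs = y" using as bs by blast
    then show ?thesis using reachable_along_exchange_path[OF d, of "{}"] by simp
  qed
qed

lemma D_LS_lower_bound: "3 * card VV \<le> 16 * (2 * k + 1) * D_LS VV kneser_adj"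
proof -
  obtain Q where Q: "balanced_separator VV kneser_adj Q" "card Q \<le> D_LS VV kneser_adj"
    using connected_graph.balanced_separator_le_D_LS[OF connected_graph_odd] by blast
  have QV: "Q \<subseteq> VV" using Q(1) unfolding balanced_separator_def by simp
  have "card (VV - Q) = card VV - card Q" "card Q \<le> card VV"
    using QV finite_VV by (auto simp: card_Diff_subset finite_subset card_mono)
  then have "3 * card VV \<le> 16 * (2 * k + 1) * card Q"
    using card_separated_pairs_ge[OF finite_VV Q(1)] card_separated_pairs[OF QV] card_VV
    by (intro separator_size_arith) auto
  also have "\<dots> \<le> 16 * (2 * k + 1) * D_LS VV kneser_adj" using Q(2) by simp
  finally show ?thesis .
qed

lemma binomial_div_le_D_LS: "real ((2 * k + 1) choose k) / real k \<le> 16 * real (D_LS VV kneser_adj)"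
proof -
  have "real (3 * ((2 * k + 1) choose k)) \<le> real (16 * (2 * k + 1) * D_LS VV kneser_adj)"
    using D_LS_lower_bound card_VV by (simp only: of_nat_le_iff)
  moreover have "16 * (2 * real k + 1) * real (D_LS VV kneser_adj) \<le> 16 * (3 * real k) * real (D_LS VV kneser_adj)"
    using k_pos by (intro mult_right_mono) auto
  ultimately have "real ((2 * k + 1) choose k) \<le> 16 * real k * real (D_LS VV kneser_adj)"
    by (simp add: algebra_simps)
  then show ?thesis using k_pos by (simp add: field_simps)
qed

end

theorem theorem3p5:
  shows "(\<lambda>k. real (D_LS (kneser_vertices (2*k+1) k) kneser_adj))
           \<in> \<Omega>(\<lambda>k. real ((2*k+1) choose k) / real k)"
proof -
  have "eventually (\<lambda>k. norm (real ((2*k+1) choose k) / real k)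
      \<le> 16 * norm (real (D_LS (kneser_vertices (2*k+1) k) kneser_adj))) at_top"
  proof (rule eventually_at_top_linorderI[of 1])
    fix k :: nat assume "1 \<le> k"
    then interpret odd_graph k by unfold_locales simp
    show "norm (real ((2*k+1) choose k) / real k) \<le> 16 * norm (real (D_LS VV kneser_adj))"
      using binomial_div_le_D_LS by simp
  qed
  then show ?thesis by (simp add: bigomega_iff_bigo bigoI)
qed

end
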